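(* Let $n>1$ be an integer with prime factorization $n=\prod_{i=1}^{\ell}p_i^{a_i}$, where $p_1<p_2<\cdots<p_\ell$ are primes and each $a_i\ge 1$. Then $F_n=D_n$ if and only if \[ p_i-1=\prod_{j=1}^{i-1}p_j^{a_j}\quad\text{for all }1\le i\le \ell \] (for $i=1$ the empty product is $1$, so the condition says $p_1=2$).
   Context: For a composite integer $n$, let $d(n)$ denote the largest divisor of $n$ with $1<d(n)<n$. Define $f$ on integers $n>1$ by $f(n)=n-1$ if $n$ is prime and $f(n)=n-d(n)$ if $n$ is composite. Let $f^{(0)}(n)=n$ and $f^{(i)}=f\circ f^{(i-1)}$ for $i\ge1$. Since $f(m)<m$ for all $m>1$, iterating $f$ from $n$ eventually reaches $1$; define $F_n=\{n,f(n),f^{(2)}(n),\dots,1\}$ to be the set of all iterates up to and including the first occurrence of $1$. Let $D_n$ denote the set of all positive divisors of $n$. *)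

theory Defs
  imports "HOL-Computational_Algebra.Primes"
begin

definition lpd :: "nat \<Rightarrow> nat" where
  "lpd n = (GREATEST d. d dvd n \<and> 1 < d \<and> d < n)"

definition fmap :: "nat \<Rightarrow> nat" where
  "fmap n = (if prime n then n - 1 else n - lpd n)"

definition Fset :: "nat \<Rightarrow> nat set" where
  "Fset n = {(fmap ^^ i) n | i. i \<le> (LEAST k. (fmap ^^ k) n = 1)}"

definition Dset :: "nat \<Rightarrow> nat set" where
  "Dset n = {d. d dvd n}"

end

theory Submission
  imports Defs
begin

text \<open>With p the least prime factor of n, f(n) = (n/p)(p - 1). If no prime factor of d exceeds p,
then f(d p^k) = f(d) p^k, so the trajectory of d p^k is p^k times the trajectory of d followed by
the trajectory of p^k, and the latter consists of p^k and the numbers x p^j (j < k) with x on the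
trajectory of p - 1. Writing n = m p^a with p^a the largest prime power of n, this gives
F_n = D_n exactly when F_m = D_m and p - 1 = m, and induction on n yields the theorem.\<close>

definition min_prime_factor :: "nat \<Rightarrow> nat" where
  "min_prime_factor n = Min (prime_factors n)"

lemma min_prime_factor_in_prime_factors:
  assumes "n > 1"
  shows "min_prime_factor n \<in> prime_factors n"
proof -
  obtain p where "prime p" "p dvd n" using prime_factor_nat[of n] assms by auto
  then have "p \<in> prime_factors n" using assms by (auto intro: prime_factorsI)
  then have "prime_factors n \<noteq> {}" by blast
  then show ?thesis unfolding min_prime_factor_def by (rule Min_in[rotated]) simp
qed

lemma min_prime_factor_le:
  assumes "q \<in> prime_factors n"
  shows "min_prime_factor n \<le> q"
  unfolding min_prime_factor_def using assms by simp

lemma lpd_eq_div_min_prime_factor: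
  assumes "n > 1" "\<not> prime n"
  shows "lpd n = n div min_prime_factor n"
  unfolding lpd_def
proof (rule Greatest_equality)
  define p where "p = min_prime_factor n"
  have p: "prime p" "p dvd n"
    using min_prime_factor_in_prime_factors[OF assms(1)] unfolding p_def by auto
  then obtain k where k: "n = p * k" by blast
  have "k > 1" using k assms p by (cases "k \<le> 1") (auto simp: le_Suc_eq)
  moreover have "k < p * k" using \<open>k > 1\<close> prime_gt_1_nat[OF p(1)] by simp
  ultimately show "n div p dvd n \<and> 1 < n div p \<and> n div p < n"
    using k prime_gt_0_nat[OF p(1)] by simp
next
  fix y assume y: "y dvd n \<and> 1 < y \<and> y < n"
  then obtain e where e: "n = y * e" by blast
  then have "e > 1" using y by (cases "e \<le> 1") (auto simp: le_Suc_eq)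
  then obtain q where q: "prime q" "q dvd e" using prime_factor_nat[of e] by auto
  then have "q dvd n" using e by simp
  then have "min_prime_factor n \<le> q"
    using q assms(1) by (intro min_prime_factor_le prime_factorsI) auto
  also have "q \<le> e" using q \<open>e > 1\<close> by (simp add: dvd_imp_le)
  finally have "y * min_prime_factor n \<le> n" using e by simp
  moreover have "min_prime_factor n > 0"
    using min_prime_factor_in_prime_factors[OF assms(1)] prime_gt_0_nat by blast
  ultimately show "y \<le> n div min_prime_factor n" by (simp add: less_eq_div_iff_mult_less_eq)
qed

lemma fmap_eq_min_prime_factor:
  assumes "n > 1"
  shows "fmap n = n div min_prime_factor n * (min_prime_factor n - 1)"
proof (cases "prime n")
  case True
  then have "min_prime_factor n = n" by (simp add: min_prime_factor_def prime_prime_factors)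
  then show ?thesis using True assms by (simp add: fmap_def)
next
  case False
  have "min_prime_factor n dvd n" using min_prime_factor_in_prime_factors[OF assms] by auto
  then have "n - n div min_prime_factor n = n div min_prime_factor n * (min_prime_factor n - 1)"
    by (metis diff_mult_distrib2 dvd_div_mult_self mult.right_neutral)
  then show ?thesis using False assms by (simp add: fmap_def lpd_eq_div_min_prime_factor)
qed

lemma fmap_pos_less:
  assumes "n > 1"
  shows "0 < fmap n" "fmap n < n"
proof -
  define p where "p = min_prime_factor n"
  have p: "prime p" "p dvd n"
    using min_prime_factor_in_prime_factors[OF assms] unfolding p_def by auto
  then obtain k where k: "n = p * k" by blast
  have "p > 1" using prime_gt_1_nat[OF p(1)] .
  have "k > 0" using k assms by (cases k) auto
  have "fmap n = n div p * (p - 1)" using fmap_eq_min_prime_factor[OF assms] by (simp only: p_def)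
  also have "n div p = k" using k \<open>p > 1\<close> by simp
  finally have f: "fmap n = k * (p - 1)" .
  show "0 < fmap n" using f \<open>k > 0\<close> \<open>p > 1\<close> by simp
  have "k * (p - 1) < k * p" using \<open>k > 0\<close> \<open>p > 1\<close> by simp
  then show "fmap n < n" using f k by (simp add: mult.commute)
qed

lemma fmap_induct [consumes 1, case_names one step]:
  assumes "n \<ge> 1" "P 1" "\<And>n. n > 1 \<Longrightarrow> P (fmap n) \<Longrightarrow> P n"
  shows "P n"
  using assms(1)
proof (induction n rule: less_induct)
  case (less n)
  show ?case
  proof (cases "n = 1")
    case False
    then have "n > 1" using less.prems by simp
    then show ?thesis using assms(3) less.IH fmap_pos_less[of n] by (simp add: Suc_le_eq)
  qed (use assms(2) in simp)
qed

lemma fmap_reaches_1: "n \<ge> 1 \<Longrightarrow> \<exists>k. (fmap ^^ k) n = 1"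
proof (induction n rule: fmap_induct)
  case one
  show ?case by (auto intro: exI[of _ 0])
next
  case (step n)
  then obtain k where "(fmap ^^ k) (fmap n) = 1" by blast
  then show ?case by (intro exI[of _ "Suc k"]) (simp add: funpow_swap1)
qed

lemma Fset_Suc_0 [simp]: "Fset (Suc 0) = {Suc 0}"
  by (simp add: Fset_def)

lemma Fset_step:
  assumes "n > 1"
  shows "Fset n = insert n (Fset (fmap n))"
proof -
  obtain k where "(fmap ^^ k) n = 1" using assms fmap_reaches_1 by fastforce
  then have L: "(LEAST k. (fmap ^^ k) n = 1) = Suc (LEAST k. (fmap ^^ k) (fmap n) = 1)"
    using Least_Suc[of "\<lambda>k. (fmap ^^ k) n = 1"] assms by (simp add: funpow_swap1)
  have "Fset n = (\<lambda>i. (fmap ^^ i) n) ` {..LEAST k. (fmap ^^ k) n = 1}"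
    unfolding Fset_def by auto
  also have "\<dots> = insert n ((\<lambda>i. (fmap ^^ i) (fmap n)) ` {..LEAST k. (fmap ^^ k) (fmap n) = 1})"
    unfolding L atMost_Suc_eq_insert_0 by (simp add: image_image funpow_Suc_right del: funpow.simps)
  also have "\<dots> = insert n (Fset (fmap n))"
    unfolding Fset_def by auto
  finally show ?thesis .
qed

lemma self_in_Fset: "n \<in> Fset n"
proof -
  have "n = (fmap ^^ 0) n \<and> 0 \<le> (LEAST k. (fmap ^^ k) n = 1)" by simp
  then show ?thesis unfolding Fset_def by blast
qed

lemma Fset_subset_atLeastAtMost: "n \<ge> 1 \<Longrightarrow> Fset n \<subseteq> {1..n}"
proof (induction n rule: fmap_induct)
  case (step n)
  then show ?case using Fset_step[of n] fmap_pos_less[of n] by auto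
qed simp

lemma one_in_Fset: "n \<ge> 1 \<Longrightarrow> 1 \<in> Fset n"
proof (induction n rule: fmap_induct)
  case (step n)
  then show ?case using Fset_step[of n] by auto
qed simp

lemma Fset_of_mem:
  assumes "n \<ge> 1" "m \<in> Fset n"
  shows "Fset m = {k \<in> Fset n. k \<le> m}"
  using assms
proof (induction n rule: fmap_induct)
  case (step n)
  have "fmap n \<ge> 1" "fmap n < n" using fmap_pos_less[OF step(1)] by auto
  then have small: "Fset (fmap n) \<subseteq> {..< n}" using Fset_subset_atLeastAtMost by fastforce
  show ?case
  proof (cases "m = n")
    case True
    have "Fset n \<subseteq> {..n}" using Fset_subset_atLeastAtMost[of n] step(1) by auto
    then show ?thesis using True by blast
  next
    case False
    then have "m \<in> Fset (fmap n)" using step(3) Fset_step[OF step(1)] by simp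
    then have "m < n" using small by blast
    have "Fset m = {k \<in> Fset (fmap n). k \<le> m}"
      using step(2) \<open>m \<in> Fset (fmap n)\<close> .
    also have "\<dots> = {k \<in> Fset n. k \<le> m}"
      unfolding Fset_step[OF step(1)] using \<open>m < n\<close> by auto
    finally show ?thesis .
  qed
qed auto

lemma fmap_in_Fset:
  assumes "n \<ge> 1" "m \<in> Fset n" "m > 1"
  shows "fmap m \<in> Fset n"
proof -
  have "fmap m \<in> Fset m"
    using Fset_step[OF assms(3)] self_in_Fset[of "fmap m"] by simp
  then show ?thesis using Fset_of_mem[OF assms(1,2)] by simp
qed

lemma min_prime_factor_prime_power:
  assumes "prime p" "k > 0"
  shows "min_prime_factor (p ^ k) = p"
  using assms by (simp add: min_prime_factor_def prime_factorization_prime_power)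

lemma min_prime_factor_mult_prime_power:
  assumes "prime p" "d > 1" "\<forall>q\<in>prime_factors d. q \<le> p"
  shows "min_prime_factor (d * p ^ k) = min_prime_factor d"
proof (rule antisym)
  have "d * p ^ k \<noteq> 0" using assms by simp
  then have pf: "prime_factors (d * p ^ k) = prime_factors d \<union> prime_factors (p ^ k)"
    by (simp add: prime_factors_product)
  have s: "min_prime_factor d \<in> prime_factors d" using min_prime_factor_in_prime_factors[OF assms(2)] .
  then show "min_prime_factor (d * p ^ k) \<le> min_prime_factor d"
    by (intro min_prime_factor_le) (simp add: pf)
  have "d \<le> d * p ^ k" using prime_gt_0_nat[OF assms(1)] by simp
  then have "d * p ^ k > 1" using assms(2) by linarith
  then have "min_prime_factor (d * p ^ k) \<in> prime_factors d \<union> prime_factors (p ^ k)"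
    using min_prime_factor_in_prime_factors pf by metis
  moreover have "q = p" if "q \<in> prime_factors (p ^ k)" for q
    using that assms(1) by (simp add: prime_factorization_prime_power split: if_splits)
  ultimately show "min_prime_factor d \<le> min_prime_factor (d * p ^ k)"
    using s assms(3) min_prime_factor_le by (metis UnE)
qed

lemma fmap_mult_prime_power:
  assumes "prime p" "d > 1" "\<forall>q\<in>prime_factors d. q \<le> p"
  shows "fmap (d * p ^ k) = fmap d * p ^ k"
proof -
  define s where "s = min_prime_factor d"
  have "s dvd d" using min_prime_factor_in_prime_factors[OF assms(2)] s_def by auto
  have "d \<le> d * p ^ k" using prime_gt_0_nat[OF assms(1)] by simp
  then have "d * p ^ k > 1" using assms(2) by linarith
  then have "fmap (d * p ^ k) = d * p ^ k div s * (s - 1)"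
    using fmap_eq_min_prime_factor min_prime_factor_mult_prime_power[OF assms] s_def by simp
  also have "d * p ^ k div s = d div s * p ^ k" using \<open>s dvd d\<close> by (simp add: dvd_div_mult)
  finally show ?thesis using fmap_eq_min_prime_factor[OF assms(2)] s_def by simp
qed

lemma prime_factor_of_fmap:
  assumes "n > 1" "q \<in> prime_factors (fmap n)"
  shows "q \<in> prime_factors n \<or> q < min_prime_factor n"
proof -
  define s where "s = min_prime_factor n"
  have s: "prime s" "s dvd n" using min_prime_factor_in_prime_factors[OF assms(1)] s_def by auto
  have q: "prime q" "q dvd n div s * (s - 1)" using assms fmap_eq_min_prime_factor[OF assms(1)] s_def by auto
  show ?thesis
  proof (cases "q dvd n div s")
    case True
    then have "q dvd n" using s(2) by (metis dvd_div_mult_self dvd_mult2)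
    then show ?thesis using q(1) assms(1) by (auto intro: prime_factorsI)
  next
    case False
    then have "q dvd s - 1" using q prime_dvd_mult_iff by blast
    moreover have "s - 1 > 0" using prime_gt_1_nat[OF s(1)] by simp
    ultimately have "q < s" by (auto dest: dvd_imp_le)
    then show ?thesis by (simp add: s_def)
  qed
qed

lemma Fset_mult_prime_power:
  assumes "prime p" "d \<ge> 1" "\<forall>q\<in>prime_factors d. q \<le> p"
  shows "Fset (d * p ^ k) = (\<lambda>x. x * p ^ k) ` Fset d \<union> Fset (p ^ k)"
  using assms(2,3)
proof (induction d rule: fmap_induct)
  case one
  then show ?case using self_in_Fset[of "p ^ k"] by auto
next
  case (step d)
  have "\<forall>q\<in>prime_factors (fmap d). q \<le> p"
  proof
    fix q assume "q \<in> prime_factors (fmap d)"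
    then have "q \<in> prime_factors d \<or> q < min_prime_factor d"
      using prime_factor_of_fmap step(1) by blast
    then show "q \<le> p"
      using step(3) min_prime_factor_in_prime_factors[OF step(1)] by fastforce
  qed
  then have IH: "Fset (fmap d * p ^ k) = (\<lambda>x. x * p ^ k) ` Fset (fmap d) \<union> Fset (p ^ k)"
    using step(2) by blast
  have "d \<le> d * p ^ k" using prime_gt_0_nat[OF assms(1)] by simp
  then have "d * p ^ k > 1" using step(1) by linarith
  then show ?case
    using Fset_step[of "d * p ^ k"] Fset_step[OF step(1)] IH
      fmap_mult_prime_power[OF assms(1) step(1,3)] by simp
qed

lemma Fset_prime_power:
  assumes "prime p"
  shows "Fset (p ^ k) = insert (p ^ k) {x * p ^ j | x j. x \<in> Fset (p - 1) \<and> j < k}"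
proof (induction k)
  case (Suc k)
  have "p - 1 \<ge> 1" "\<forall>q\<in>prime_factors (p - 1). q \<le> p"
    using prime_gt_1_nat[OF assms] by (auto dest!: in_prime_factors_imp_dvd dvd_imp_le)
  then have "Fset ((p - 1) * p ^ k) = (\<lambda>x. x * p ^ k) ` Fset (p - 1) \<union> Fset (p ^ k)"
    using Fset_mult_prime_power[OF assms] by blast
  moreover have "p ^ Suc k > 1" using prime_gt_1_nat[OF assms] by (intro one_less_power) auto
  moreover have "min_prime_factor (p ^ Suc k) = p"
    using min_prime_factor_prime_power[OF assms] by blast
  then have "fmap (p ^ Suc k) = (p - 1) * p ^ k"
    using fmap_eq_min_prime_factor[OF \<open>p ^ Suc k > 1\<close>] prime_gt_0_nat[OF assms] by simp
  moreover have "p ^ k \<in> (\<lambda>x. x * p ^ k) ` Fset (p - 1)"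
    using one_in_Fset[OF \<open>p - 1 \<ge> 1\<close>] by force
  ultimately show ?case
    using Fset_step[of "p ^ Suc k"] Suc.IH by (auto simp: less_Suc_eq)
qed simp

lemma Dset_mult_prime_power:
  assumes "prime p" "\<not> p dvd m"
  shows "Dset (m * p ^ a) = {d * p ^ j | d j. d dvd m \<and> j \<le> a}"
proof (intro set_eqI iffI)
  fix x assume "x \<in> Dset (m * p ^ a)"
  then have x: "x dvd m * p ^ a" by (simp add: Dset_def)
  have "m \<noteq> 0" using assms(2) by (auto intro: Nat.gr0I)
  then have "m * p ^ a \<noteq> 0" using prime_gt_0_nat[OF assms(1)] by simp
  then have "x \<noteq> 0" using x by (metis dvd_0_left_iff)
  then obtain y where y: "x = p ^ multiplicity p x * y" "\<not> p dvd y"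
    using multiplicity_decompose'[OF \<open>x \<noteq> 0\<close>] assms(1) by (metis not_prime_unit)
  have "coprime y (p ^ a)" using prime_imp_coprime[OF assms(1) y(2)] by (simp add: coprime_commute)
  moreover have "y dvd m * p ^ a" using x y(1) by (metis dvd_mult_right)
  ultimately have "y dvd m" by (simp add: coprime_dvd_mult_left_iff)
  have "coprime (p ^ multiplicity p x) m" using prime_imp_coprime[OF assms] by simp
  moreover have "p ^ multiplicity p x dvd m * p ^ a" using x y(1) by (metis dvd_mult_left)
  ultimately have "p ^ multiplicity p x dvd p ^ a" by (simp add: coprime_dvd_mult_right_iff)
  then have "multiplicity p x \<le> a" using power_dvd_imp_le prime_gt_1_nat[OF assms(1)] by blast
  with \<open>y dvd m\<close> show "x \<in> {d * p ^ j | d j. d dvd m \<and> j \<le> a}"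
    using y(1) by (auto simp: mult.commute)
next
  fix x assume "x \<in> {d * p ^ j | d j. d dvd m \<and> j \<le> a}"
  then show "x \<in> Dset (m * p ^ a)" by (auto simp: Dset_def mult_dvd_mono le_imp_power_dvd)
qed

lemma Fset_eq_Dset_cofactor:
  assumes "prime p" "m \<ge> 1" "\<forall>q\<in>prime_factors m. q < p"
    and "Fset (m * p ^ a) = Dset (m * p ^ a)"
  shows "Fset m = Dset m"
proof (intro set_eqI iffI)
  have "\<forall>q\<in>prime_factors m. q \<le> p" using assms(3) by auto
  then have split: "Fset (m * p ^ a) = (\<lambda>x. x * p ^ a) ` Fset m \<union> Fset (p ^ a)"
    using Fset_mult_prime_power[OF assms(1,2)] by blast
  have "p ^ a > 0" using prime_gt_0_nat[OF assms(1)] by simp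
  fix x
  show "x \<in> Dset m" if "x \<in> Fset m"
  proof -
    have "x * p ^ a \<in> Fset (m * p ^ a)" using that split by blast
    then have "x * p ^ a dvd m * p ^ a" using assms(4) by (simp add: Dset_def)
    then show ?thesis using prime_gt_0_nat[OF assms(1)] by (simp add: Dset_def)
  qed
  show "x \<in> Fset m" if "x \<in> Dset m"
  proof -
    have "x dvd m" using that by (simp add: Dset_def)
    then have "x * p ^ a \<in> Fset (m * p ^ a)" using assms(4) by (simp add: Dset_def mult_dvd_mono)
    then consider "x * p ^ a \<in> (\<lambda>x. x * p ^ a) ` Fset m" | "x * p ^ a \<in> Fset (p ^ a)"
      using split by blast
    then show ?thesis
    proof cases
      case 1
      then show ?thesis using \<open>p ^ a > 0\<close> by auto
    next
      case 2
      then have "x * p ^ a \<le> 1 * p ^ a"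
        using Fset_subset_atLeastAtMost[of "p ^ a"] \<open>p ^ a > 0\<close> by fastforce
      then have "x \<le> 1" using \<open>p ^ a > 0\<close> by (simp only: mult_le_cancel2)
      moreover have "x \<noteq> 0" using \<open>x dvd m\<close> assms(2) by auto
      ultimately have "x = 1" by simp
      then show ?thesis using one_in_Fset[OF assms(2)] by simp
    qed
  qed
qed

lemma Fset_eq_Dset_predecessor:
  assumes "prime p" "m \<ge> 1" "\<forall>q\<in>prime_factors m. q < p" "a > 0"
    and F: "Fset (m * p ^ a) = Dset (m * p ^ a)"
  shows "p - 1 = m"
proof -
  let ?n = "m * p ^ a"
  have "?n \<ge> 1" using assms(2) prime_gt_0_nat[OF assms(1)] by simp
  have "\<not> p dvd m" using assms(1-3) prime_factorsI[of m p] by auto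
  have "p dvd ?n" using assms(4) by (simp add: dvd_power)
  then have "p \<in> Fset ?n" using F by (simp add: Dset_def)
  then have "fmap p \<in> Fset ?n"
    using fmap_in_Fset[OF \<open>?n \<ge> 1\<close>] prime_gt_1_nat[OF assms(1)] by simp
  then have "p - 1 dvd ?n" using F assms(1) by (simp add: Dset_def fmap_def)
  moreover have "coprime (p - 1) p"
    using prime_gt_0_nat[OF assms(1)] by (rule coprime_diff_one_left_nat)
  then have "coprime (p - 1) (p ^ a)" by simp
  ultimately have "p - 1 dvd m" by (simp add: coprime_dvd_mult_left_iff)
  then have "p - 1 \<le> m" using assms(2) by (simp add: dvd_imp_le)
  moreover have "\<not> p < m" \<comment> \<open>else p, lying on the trajectory of m, would divide m\<close>
  proof
    assume "p < m"
    have "m \<in> Fset ?n" using F by (simp add: Dset_def)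
    then have "p \<in> Fset m"
      using Fset_of_mem[OF \<open>?n \<ge> 1\<close> \<open>m \<in> Fset ?n\<close>] \<open>p \<in> Fset ?n\<close> \<open>p < m\<close> by simp
    then show False
      using Fset_eq_Dset_cofactor[OF assms(1-3) F] \<open>\<not> p dvd m\<close> by (simp add: Dset_def)
  qed
  moreover have "p \<noteq> m" using \<open>\<not> p dvd m\<close> by auto
  ultimately show ?thesis by linarith
qed

lemma Fset_eq_Dset_mult_prime_power:
  assumes "prime p" "m \<ge> 1" "\<forall>q\<in>prime_factors m. q < p" "a > 0"
  shows "Fset (m * p ^ a) = Dset (m * p ^ a) \<longleftrightarrow> Fset m = Dset m \<and> p - 1 = m"
proof
  assume "Fset (m * p ^ a) = Dset (m * p ^ a)"
  then show "Fset m = Dset m \<and> p - 1 = m"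
    using Fset_eq_Dset_cofactor Fset_eq_Dset_predecessor assms by blast
next
  assume "Fset m = Dset m \<and> p - 1 = m"
  then have Fm: "Fset m = Dset m" and pm: "Fset (p - 1) = Dset m" by simp_all
  have "\<forall>q\<in>prime_factors m. q \<le> p" using assms(3) by auto
  then have "Fset (m * p ^ a) =
      (\<lambda>x. x * p ^ a) ` Dset m \<union> insert (p ^ a) {x * p ^ j | x j. x \<in> Dset m \<and> j < a}"
    using Fset_mult_prime_power[OF assms(1,2)] Fset_prime_power[OF assms(1)] Fm pm by simp
  also have "\<dots> = (\<lambda>x. x * p ^ a) ` Dset m \<union> {x * p ^ j | x j. x \<in> Dset m \<and> j < a}"
    using imageI[of 1 "Dset m" "\<lambda>x. x * p ^ a"] by (auto simp: Dset_def)
  also have "\<dots> = {d * p ^ j | d j. d dvd m \<and> j \<le> a}"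
    by (auto simp: Dset_def le_less)
  also have "\<dots> = Dset (m * p ^ a)"
  proof -
    have "\<not> p dvd m" using assms(1-3) prime_factorsI[of m p] by auto
    then show ?thesis using Dset_mult_prime_power[OF assms(1)] by simp
  qed
  finally show "Fset (m * p ^ a) = Dset (m * p ^ a)" .
qed

definition lower_part :: "nat \<Rightarrow> nat \<Rightarrow> nat" where
  "lower_part n r = (\<Prod>q\<in>{q \<in> prime_factors n. q < r}. q ^ multiplicity q n)"

definition lower_part_condition :: "nat \<Rightarrow> bool" where
  "lower_part_condition n \<longleftrightarrow> (\<forall>p\<in>prime_factors n. p - 1 = lower_part n p)"

lemma prime_factors_mult_prime_power:
  assumes "prime p" "m \<noteq> 0" "a > 0"
  shows "prime_factors (m * p ^ a) = insert p (prime_factors m)"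
  using assms by (auto simp: prime_factors_product prime_factorization_prime_power)

lemma multiplicity_mult_prime_power:
  assumes "prime p" "prime q" "q \<noteq> p" "m \<noteq> 0"
  shows "multiplicity q (m * p ^ a) = multiplicity q m"
  using assms prime_elem_multiplicity_mult_distrib[of q m "p ^ a"]
  by (simp add: multiplicity_distinct_prime_power)

lemma lower_part_mult_prime_power:
  assumes "prime p" "m \<noteq> 0" "r \<le> p"
  shows "lower_part (m * p ^ a) r = lower_part m r"
proof -
  have "{q \<in> prime_factors (m * p ^ a). q < r} = {q \<in> prime_factors m. q < r}"
    using assms prime_factors_mult_prime_power[OF assms(1,2), of a] by (cases "a = 0") auto
  then show ?thesis
    unfolding lower_part_def using assms(3) multiplicity_mult_prime_power[OF assms(1) _ _ assms(2)]
    by (intro prod.cong) (auto simp: in_prime_factors_iff)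
qed

lemma lower_part_eq_self:
  assumes "m \<noteq> 0" "\<forall>q\<in>prime_factors m. q < r"
  shows "lower_part m r = m"
proof -
  have "{q \<in> prime_factors m. q < r} = prime_factors m" using assms(2) by blast
  then show ?thesis
    unfolding lower_part_def using prime_factorization_nat[of m] assms(1) by simp
qed

lemma lower_part_condition_mult_prime_power:
  assumes "prime p" "m \<noteq> 0" "\<forall>q\<in>prime_factors m. q < p" "a > 0"
  shows "lower_part_condition (m * p ^ a) \<longleftrightarrow> lower_part_condition m \<and> p - 1 = m"
proof -
  have "lower_part (m * p ^ a) p = m"
    using lower_part_mult_prime_power[OF assms(1,2)] lower_part_eq_self[OF assms(2,3)] by simp
  moreover have "lower_part (m * p ^ a) r = lower_part m r" if "r \<in> prime_factors m" for r
    using lower_part_mult_prime_power[OF assms(1,2)] assms(3) that by (simp add: less_imp_le)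
  ultimately show ?thesis
    unfolding lower_part_condition_def prime_factors_mult_prime_power[OF assms(1,2,4)] by auto
qed

lemma largest_prime_power_decomposition:
  fixes n :: nat
  assumes "n > 1"
  obtains p a m where "prime p" "a > 0" "m \<ge> 1" "\<forall>q\<in>prime_factors m. q < p" "n = m * p ^ a"
proof -
  define p where "p = Max (prime_factors n)"
  define a where "a = multiplicity p n"
  define m where "m = n div p ^ a"
  have "p \<in> prime_factors n"
    using min_prime_factor_in_prime_factors[OF assms] unfolding p_def by (intro Max_in) auto
  then have p: "prime p" "p dvd n" by auto
  have "a > 0" using p assms by (simp add: a_def prime_multiplicity_gt_zero_iff)
  have n: "n = m * p ^ a" by (simp add: m_def a_def multiplicity_dvd)
  then have "m \<ge> 1" using assms by (cases m) auto
  have "\<not> p dvd m"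
    unfolding m_def a_def using assms p(1) by (intro multiplicity_decompose) auto
  have "q < p" if "q \<in> prime_factors m" for q
  proof -
    have "q dvd n" using that n by auto
    then have "q \<in> prime_factors n" using that assms by (auto intro: prime_factorsI)
    then have "q \<le> p" unfolding p_def by simp
    moreover have "q \<noteq> p" using that \<open>\<not> p dvd m\<close> by auto
    ultimately show ?thesis by simp
  qed
  then show thesis using that p(1) \<open>a > 0\<close> \<open>m \<ge> 1\<close> n by blast
qed

lemma Fset_eq_Dset_iff_lower_part_condition:
  "n \<ge> 1 \<Longrightarrow> Fset n = Dset n \<longleftrightarrow> lower_part_condition n"
proof (induction n rule: less_induct)
  case (less n)
  show ?case
  proof (cases "n = 1")
    case True
    then show ?thesis by (auto simp: Dset_def lower_part_condition_def)
  next
    case False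
    then obtain p a m where pam: "prime p" "a > 0" "m \<ge> 1" "\<forall>q\<in>prime_factors m. q < p"
      and n: "n = m * p ^ a"
      using largest_prime_power_decomposition less.prems by (metis le_neq_implies_less)
    have "p ^ a > 1" using prime_gt_1_nat[OF pam(1)] pam(2) by (rule one_less_power)
    then have "m < n" using n pam by simp
    then show ?thesis
      using less.IH[of m] pam n Fset_eq_Dset_mult_prime_power lower_part_condition_mult_prime_power
      by simp
  qed
qed

lemma prod_strict_sorted_below_nth:
  fixes xs :: "'a::linorder list"
  assumes "sorted_wrt (<) xs" "i < length xs"
  shows "(\<Prod>x\<in>{x \<in> set xs. x < xs ! i}. f x) = (\<Prod>j<i. f (xs ! j))"
proof -
  have "{x \<in> set xs. x < xs ! i} = (!) xs ` {..<i}"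
  proof (intro set_eqI iffI)
    fix x assume "x \<in> {x \<in> set xs. x < xs ! i}"
    then obtain j where j: "j < length xs" "x = xs ! j" "xs ! j < xs ! i"
      by (auto simp: in_set_conv_nth)
    then have "j < i"
      using sorted_wrt_nth_less[OF assms(1), of i j] by (cases "i < j") (auto simp: not_less_iff_gr_or_eq)
    then show "x \<in> (!) xs ` {..<i}" using j by auto
  qed (use assms sorted_wrt_nth_less[OF assms(1)] in auto)
  moreover have "inj_on ((!) xs) {..<i}"
    using assms by (intro inj_on_nth) (auto simp: strict_sorted_iff)
  ultimately show ?thesis by (simp add: prod.reindex)
qed

theorem lemma2:
  fixes n :: nat
  assumes "n > 1"
  defines "ps \<equiv> sorted_list_of_set (prime_factors n)"
  shows "Fset n = Dset n \<longleftrightarrow>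
         (\<forall>i < length ps. ps ! i - 1 = (\<Prod>j<i. (ps ! j) ^ multiplicity (ps ! j) n))"
proof -
  have "set ps = prime_factors n" "sorted_wrt (<) ps" by (simp_all add: ps_def)
  then have "lower_part n (ps ! i) = (\<Prod>j<i. (ps ! j) ^ multiplicity (ps ! j) n)"
    if "i < length ps" for i
    unfolding lower_part_def using prod_strict_sorted_below_nth[of ps i] that by simp
  moreover have "Fset n = Dset n \<longleftrightarrow> (\<forall>p\<in>set ps. p - 1 = lower_part n p)"
    using Fset_eq_Dset_iff_lower_part_condition assms(1) \<open>set ps = prime_factors n\<close>
    by (simp add: lower_part_condition_def)
  ultimately show ?thesis by (simp add: all_set_conv_all_nth)
qed

end
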